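(* Let $A$ be a pca and $f,g:A\rightharpoonup A$ partial functions. Then the pcas $A[f][g]$ and $A[g][f]$ are isomorphic.
   Context: A partial combinatory algebra (pca) is a set $A$ with a partial binary application (associating to the left) admitting $K,S\in A$ with $Kab=a$, $Sab{\downarrow}$, $Sabc\simeq ac(bc)$. Each pca has fixed Booleans $\top,\bot$, pairing $p$ with projections $p_0,p_1$ ($p_0(pab)=a$, $p_1(pab)=b$), and a coding $[u_0,\dots,u_{n-1}]$ of finite sequences with concatenation $\ast$. For a pca $A$ and partial $f:A\rightharpoonup A$, the pca $A[f]$ has underlying set $A$; for $a,b\in A$, an $f$-dialogue between $a$ and $b$ is a code $u=[u_0,\dots,u_{n-1}]$ such that for every $i<n$ there is $v_i$ with $a\cdot([b]\ast[u_0,\dots,u_{i-1}])=p\bot v_i$ and $f(v_i)$ defined and equal to $u_i$; then $a\cdot^f b=c$ iff there is an $f$-dialogue $u$ between $a$ and $b$ with $a\cdot([b]\ast u)=p\top c$. Since $A[f]$ has underlying set $A$, $g$ is also a partial endofunction of $A[f]$, so $A[f][g]$ makes sense. An applicative morphism $\gamma:A\to B$ is a function from $A$ to nonempty subsets of $B$ with some $r\in B$ such that $aa'{\downarrow}$, $b\in\gamma(a)$, $b'\in\gamma(a')$ imply $rbb'{\downarrow}$ and $rbb'\in\gamma(aa')$; composition is $(\delta\gamma)(a)=\bigcup_{b\in\gamma(a)}\delta(b)$, identities are $a\mapsto\{a\}$. Pcas $A,B$ are isomorphic if there are applicative morphisms $\gamma:A\to B$, $\delta:B\to A$ with $\delta\gamma$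 and $\gamma\delta$ equal to the identity morphisms. *)

theory Defs
  imports Main
begin

type_synonym 'a pas = "'a \<Rightarrow> 'a \<Rightarrow> 'a option"

definition aap :: "'a pas \<Rightarrow> 'a option \<Rightarrow> 'a option \<Rightarrow> 'a option" where
  "aap m x y = (case x of None \<Rightarrow> None | Some a \<Rightarrow> (case y of None \<Rightarrow> None | Some b \<Rightarrow> m a b))"

definition pca :: "'a pas \<Rightarrow> bool" where
  "pca m \<longleftrightarrow> (\<exists>k s. \<forall>a b.
      aap m (m k a) (Some b) = Some a \<and>
      aap m (m s a) (Some b) \<noteq> None \<and>
      (\<forall>c. aap m (aap m (m s a) (Some b)) (Some c) = aap m (m a c) (m b c)))"

text \<open>The fixed auxiliary data of a pca: Booleans, pairing with projections,
  and a coding of finite sequences (lists) that is computable in the pca.\<close>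
record 'a pca_data =
  tt :: 'a
  ff :: 'a
  pr :: 'a
  pr0 :: 'a
  pr1 :: 'a
  code :: "'a list \<Rightarrow> 'a"

definition valid_data :: "'a pas \<Rightarrow> 'a pca_data \<Rightarrow> bool" where
  "valid_data m d \<longleftrightarrow>
     (\<forall>a b. aap m (m (tt d) a) (Some b) = Some a) \<and>
     (\<forall>a b. aap m (m (ff d) a) (Some b) = Some b) \<and>
     (\<forall>a b. \<exists>c. aap m (m (pr d) a) (Some b) = Some c \<and>
                 m (pr0 d) c = Some a \<and> m (pr1 d) c = Some b) \<and>
     inj (code d) \<and>
     (\<exists>cons hd tl isnil.
        (\<forall>a us. aap m (m cons a) (Some (code d us)) = Some (code d (a # us))) \<and>
        (\<forall>a us. m hd (code d (a # us)) = Some a) \<and>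
        (\<forall>a us. m tl (code d (a # us)) = Some (code d us)) \<and>
        m isnil (code d []) = Some (tt d) \<and>
        (\<forall>a us. m isnil (code d (a # us)) = Some (ff d)))"

definition pdata :: "'a pas \<Rightarrow> 'a pca_data" where
  "pdata m = (SOME d. valid_data m d)"

text \<open>f-dialogue between a and b (w.r.t. data d): the list us, coded as code d us.
  Note [b] * [u_0,...,u_{i-1}] = code d (b # take i us).\<close>
definition dialogue :: "'a pas \<Rightarrow> 'a pca_data \<Rightarrow> ('a \<Rightarrow> 'a option) \<Rightarrow> 'a \<Rightarrow> 'a \<Rightarrow> 'a list \<Rightarrow> bool" where
  "dialogue m d f a b us \<longleftrightarrow>
     (\<forall>i < length us. \<exists>v. m a (code d (b # take i us)) = aap m (m (pr d) (ff d)) (Some v)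
                          \<and> f v = Some (us ! i))"

definition rel_app_res :: "'a pas \<Rightarrow> 'a pca_data \<Rightarrow> ('a \<Rightarrow> 'a option) \<Rightarrow> 'a \<Rightarrow> 'a \<Rightarrow> 'a \<Rightarrow> bool" where
  "rel_app_res m d f a b c \<longleftrightarrow>
     (\<exists>us. dialogue m d f a b us \<and> m a (code d (b # us)) = aap m (m (pr d) (tt d)) (Some c))"

definition rel_app :: "'a pas \<Rightarrow> 'a pca_data \<Rightarrow> ('a \<Rightarrow> 'a option) \<Rightarrow> 'a pas" where
  "rel_app m d f a b = (if \<exists>c. rel_app_res m d f a b c then Some (THE c. rel_app_res m d f a b c) else None)"

definition extend :: "'a pas \<Rightarrow> ('a \<Rightarrow> 'a option) \<Rightarrow> 'a pas" where
  "extend m f = rel_app m (pdata m) f"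

definition app_morph :: "'a pas \<Rightarrow> 'b pas \<Rightarrow> ('a \<Rightarrow> 'b set) \<Rightarrow> bool" where
  "app_morph m1 m2 \<gamma> \<longleftrightarrow> (\<forall>a. \<gamma> a \<noteq> {}) \<and>
     (\<exists>r. \<forall>a a' b b' c. m1 a a' = Some c \<longrightarrow> b \<in> \<gamma> a \<longrightarrow> b' \<in> \<gamma> a' \<longrightarrow>
          (\<exists>e. aap m2 (m2 r b) (Some b') = Some e \<and> e \<in> \<gamma> c))"

definition morph_comp :: "('b \<Rightarrow> 'c set) \<Rightarrow> ('a \<Rightarrow> 'b set) \<Rightarrow> ('a \<Rightarrow> 'c set)" where
  "morph_comp \<delta> \<gamma> a = (\<Union>b\<in>\<gamma> a. \<delta> b)"

definition pca_iso :: "'a pas \<Rightarrow> 'b pas \<Rightarrow> bool" where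
  "pca_iso m1 m2 \<longleftrightarrow> (\<exists>\<gamma> \<delta>. app_morph m1 m2 \<gamma> \<and> app_morph m2 m1 \<delta> \<and>
     morph_comp \<delta> \<gamma> = (\<lambda>a. {a}) \<and> morph_comp \<gamma> \<delta> = (\<lambda>b. {b}))"

end

theory Submission
  imports Defs
begin

text \<open>By symmetry in f and g it suffices to find one r with r \<cdot> a \<cdot> b = a \<cdot> b in A[g][f]
  whenever a \<cdot> b is defined in A[f][g]; then the identity maps are mutually inverse
  applicative morphisms. Both sides are simulated by A with the single oracle f \<oplus> g, which
  answers \<langle>tt, v\<rangle> by f v and \<langle>ff, v\<rangle> by g v. A fixed A-program computes a \<cdot> b of A[f][g]
  with oracle f \<oplus> g: it runs the dialogue of a with b, evaluating each application of A[f]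
  with tagged f-queries, and asks the g-queries of the dialogue tagged ff. Conversely a fixed
  A[g]-program turns an f \<oplus> g-program P into a computation of A[g][f]: given the answers to
  the f-queries received so far, it replays P, asks the g-queries itself, and hands the first
  unanswered f-query to the outer dialogue. If A has only one element there are no pca data
  (codes of lists cannot be injective), but then all applications are total and the claim is
  trivial.\<close>

section \<open>Pca data and determinism of relative application\<close>

lemma aap_simps [simp]:
  "aap m None y = None" "aap m x None = None" "aap m (Some a) (Some b) = m a b"
  by (auto simp: aap_def split: option.splits)

locale valid_pca_data =
  fixes app :: "'a pas" and d :: "'a pca_data"
  assumes valid: "valid_data app d"
begin

definition pair :: "'a \<Rightarrow> 'a \<Rightarrow> 'a" where
  "pair a b = the (aap app (app (pr d) a) (Some b))"

lemma pair_spec: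
  "aap app (app (pr d) a) (Some b) = Some (pair a b) \<and>
   app (pr0 d) (pair a b) = Some a \<and> app (pr1 d) (pair a b) = Some b"
proof -
  obtain c where "aap app (app (pr d) a) (Some b) = Some c"
      "app (pr0 d) c = Some a" "app (pr1 d) c = Some b"
    using valid unfolding valid_data_def by blast
  then show ?thesis by (simp add: pair_def)
qed

lemma pr_app [simp]: "aap app (app (pr d) a) (Some b) = Some (pair a b)"
  and pr0_pair [simp]: "app (pr0 d) (pair a b) = Some a"
  and pr1_pair [simp]: "app (pr1 d) (pair a b) = Some b"
  using pair_spec by blast+

lemma pair_eq_iff [simp]: "pair a b = pair a' b' \<longleftrightarrow> a = a' \<and> b = b'"
  by (metis option.inject pr0_pair pr1_pair)

lemma tt_app [simp]: "aap app (app (tt d) a) (Some b) = Some a"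
  and ff_app [simp]: "aap app (app (ff d) a) (Some b) = Some b"
  using valid unfolding valid_data_def by blast+

lemma code_eq_iff [simp]: "code d us = code d vs \<longleftrightarrow> us = vs"
  using valid unfolding valid_data_def inj_def by blast

lemma tt_neq_ff [simp]: "tt d \<noteq> ff d"
proof
  assume eq: "tt d = ff d"
  have "Some (code d []) = Some (code d [code d []])"
    using tt_app[of "code d []" "code d [code d []]"] ff_app[of "code d []" "code d [code d []]"]
    by (simp add: eq)
  then show False by simp
qed

lemma ff_neq_tt [simp]: "ff d \<noteq> tt d"
  using tt_neq_ff by (rule not_sym)

lemma app_tt_ex: "\<exists>z. app (tt d) a = Some z \<and> (\<forall>b. app z b = Some a)"
  using tt_app[of a] by (cases "app (tt d) a") auto

lemma app_ff_ex: "\<exists>z. app (ff d) a = Some z \<and> (\<forall>b. app z b = Some b)"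
  using ff_app[of a] by (cases "app (ff d) a") auto

lemma app_pr_ex: "\<exists>z. app (pr d) a = Some z \<and> (\<forall>b. app z b = Some (pair a b))"
  using pr_app[of a] by (cases "app (pr d) a") auto

definition list_ops_spec :: "'a \<Rightarrow> 'a \<Rightarrow> 'a \<Rightarrow> 'a \<Rightarrow> bool" where
  "list_ops_spec c h t n \<longleftrightarrow>
     (\<forall>a us. aap app (app c a) (Some (code d us)) = Some (code d (a # us))) \<and>
     (\<forall>a us. app h (code d (a # us)) = Some a) \<and>
     (\<forall>a us. app t (code d (a # us)) = Some (code d us)) \<and>
     app n (code d []) = Some (tt d) \<and>
     (\<forall>a us. app n (code d (a # us)) = Some (ff d))"

definition list_ops :: "'a \<times> 'a \<times> 'a \<times> 'a" where
  "list_ops = (SOME (c, h, t, n). list_ops_spec c h t n)"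

definition cons_op :: 'a where "cons_op = fst list_ops"
definition hd_op :: 'a where "hd_op = fst (snd list_ops)"
definition tl_op :: 'a where "tl_op = fst (snd (snd list_ops))"
definition isnil_op :: 'a where "isnil_op = snd (snd (snd list_ops))"

lemma list_ops_spec_ops: "list_ops_spec cons_op hd_op tl_op isnil_op"
proof -
  have "\<exists>q. case q of (c, h, t, n) \<Rightarrow> list_ops_spec c h t n"
    using valid unfolding valid_data_def list_ops_spec_def by auto
  then have "case list_ops of (c, h, t, n) \<Rightarrow> list_ops_spec c h t n"
    unfolding list_ops_def by (rule someI_ex)
  then show ?thesis
    by (simp add: cons_op_def hd_op_def tl_op_def isnil_op_def split: prod.splits)
qed

lemma cons_op_app [simp]: "aap app (app cons_op a) (Some (code d us)) = Some (code d (a # us))"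
  and hd_op_app [simp]: "app hd_op (code d (a # us)) = Some a"
  and tl_op_app [simp]: "app tl_op (code d (a # us)) = Some (code d us)"
  and isnil_op_Nil [simp]: "app isnil_op (code d []) = Some (tt d)"
  and isnil_op_Cons [simp]: "app isnil_op (code d (a # us)) = Some (ff d)"
  using list_ops_spec_ops unfolding list_ops_spec_def by blast+

lemma dialogue_common_prefix:
  assumes "dialogue app d h a b us" "dialogue app d h a b us'"
    and "i \<le> length us" "i \<le> length us'"
  shows "take i us = take i us'"
  using assms(3,4)
proof (induction i)
  case 0
  then show ?case by simp
next
  case (Suc i)
  have "i < length us" "i < length us'"
    using Suc.prems by simp_all
  then obtain v v' where
    v: "app a (code d (b # take i us)) = Some (pair (ff d) v)" "h v = Some (us ! i)" and
    v': "app a (code d (b # take i us')) = Some (pair (ff d) v')" "h v' = Some (us' ! i)"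
    using assms(1,2) unfolding dialogue_def pr_app by meson
  have "take i us = take i us'"
    using Suc by simp
  then have "us ! i = us' ! i"
    using v v' by simp
  with \<open>take i us = take i us'\<close> Suc.prems show ?case
    by (simp add: take_Suc_conv_app_nth)
qed

text \<open>A dialogue stops at the first answer tagged tt, so two terminating dialogues coincide.\<close>
lemma rel_app_res_unique:
  assumes "rel_app_res app d h a b c" "rel_app_res app d h a b c'"
  shows "c = c'"
proof -
  obtain us where D: "dialogue app d h a b us"
    and F: "app a (code d (b # us)) = Some (pair (tt d) c)"
    using assms(1) unfolding rel_app_res_def by auto
  obtain us' where D': "dialogue app d h a b us'"
    and F': "app a (code d (b # us')) = Some (pair (tt d) c')"
    using assms(2) unfolding rel_app_res_def by auto
  have no_longer: False
    if long: "dialogue app d h a b ws'" and short: "app a (code d (b # ws)) = Some (pair (tt d) e)"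
      and "length ws < length ws'" and prefix: "take (length ws) ws' = ws" for ws ws' e
  proof -
    obtain v where "app a (code d (b # take (length ws) ws')) = Some (pair (ff d) v)"
      using long \<open>length ws < length ws'\<close> unfolding dialogue_def by auto
    with short prefix show False by simp
  qed
  have "us = us'"
  proof (cases "length us" "length us'" rule: linorder_cases)
    case less
    then show ?thesis
      using no_longer[OF D' F less] dialogue_common_prefix[OF D D', of "length us"] by simp
  next
    case equal
    then show ?thesis
      using dialogue_common_prefix[OF D D', of "length us"] by simp
  next
    case greater
    then show ?thesis
      using no_longer[OF D F' greater] dialogue_common_prefix[OF D D', of "length us'"] by simp
  qed
  then show ?thesis
    using F F' by simp
qed

lemma rel_app_eq_Some_iff: "rel_app app d h a b = Some c \<longleftrightarrow> rel_app_res app d h a b c"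
  using rel_app_res_unique theI[of "rel_app_res app d h a b"] unfolding rel_app_def
  by (auto intro: the_equality)

end

section \<open>Combinators\<close>

datatype 'a comb = Var nat | Cst 'a | App "'a comb" "'a comb" (infixl "\<bullet>" 95)

locale pca_KS =
  fixes m :: "'a pas" and K S :: 'a
  assumes K_app: "aap m (m K a) (Some b) = Some a"
    and S_app_defined: "aap m (m S a) (Some b) \<noteq> None"
    and S_app: "aap m (aap m (m S a) (Some b)) (Some c) = aap m (m a c) (m b c)"
begin

fun eval_comb :: "(nat \<Rightarrow> 'a) \<Rightarrow> 'a comb \<Rightarrow> 'a option" where
  "eval_comb e (Var n) = Some (e n)"
| "eval_comb e (Cst c) = Some c"
| "eval_comb e (s \<bullet> t) = aap m (eval_comb e s) (eval_comb e t)"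

fun lam :: "nat \<Rightarrow> 'a comb \<Rightarrow> 'a comb" where
  "lam n (Var k) = (if k = n then Cst S \<bullet> Cst K \<bullet> Cst K else Cst K \<bullet> Var k)"
| "lam n (Cst c) = Cst K \<bullet> Cst c"
| "lam n (s \<bullet> t) = Cst S \<bullet> lam n s \<bullet> lam n t"

lemma K_app_ex: "\<exists>k. m K a = Some k"
  using K_app[of a a] by (cases "m K a") auto

lemma S_app2_ex: "\<exists>k. aap m (m S a) (Some b) = Some k"
  using S_app_defined[of a b] by auto

lemma eval_lam_ex: "\<exists>f. eval_comb e (lam n t) = Some f"
proof (induction t)
  case (Var k)
  then show ?case using S_app2_ex[of K K] K_app_ex[of "e k"] by auto
next
  case (Cst c)
  then show ?case using K_app_ex[of c] by auto
next
  case (App s t)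
  then obtain f1 f2 where "eval_comb e (lam n s) = Some f1" "eval_comb e (lam n t) = Some f2"
    by auto
  then show ?case using S_app2_ex[of f1 f2] by auto
qed

lemma eval_lam_app: "eval_comb e (lam n t) = Some f \<Longrightarrow> m f a = eval_comb (e(n := a)) t"
proof (induction t arbitrary: f)
  case (Var k)
  show ?case
  proof (cases "k = n")
    case True
    obtain ka where ka: "m K a = Some ka"
      using K_app_ex by blast
    have "m f a = aap m (aap m (m S K) (Some K)) (Some a)"
      using Var True by simp
    also have "\<dots> = aap m (m K a) (m K a)"
      by (rule S_app)
    also have "\<dots> = Some a"
      using ka K_app[of a ka] by simp
    finally show ?thesis
      using True by simp
  next
    case False
    then have "m f a = aap m (m K (e k)) (Some a)"
      using Var by simp
    then show ?thesis
      using False K_app by simp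
  qed
next
  case (Cst c)
  then have "m f a = aap m (m K c) (Some a)"
    by simp
  then show ?case
    using K_app by simp
next
  case (App s t)
  obtain f1 f2 where f1: "eval_comb e (lam n s) = Some f1" and f2: "eval_comb e (lam n t) = Some f2"
    using eval_lam_ex by blast
  have "m f a = aap m (aap m (m S f1) (Some f2)) (Some a)"
    using App.prems f1 f2 by simp
  also have "\<dots> = aap m (m f1 a) (m f2 a)"
    by (rule S_app)
  finally show ?case
    using App.IH f1 f2 by simp
qed

definition lam_val :: "(nat \<Rightarrow> 'a) \<Rightarrow> nat \<Rightarrow> 'a comb \<Rightarrow> 'a" where
  "lam_val e n t = the (eval_comb e (lam n t))"

lemma eval_lam [simp]: "eval_comb e (lam n t) = Some (lam_val e n t)"
  using eval_lam_ex[of e n t] by (auto simp: lam_val_def)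

lemma lam_val_app [simp]: "m (lam_val e n t) a = eval_comb (e(n := a)) t"
  using eval_lam_app eval_lam by blast

declare lam.simps [simp del]

definition env0 :: "nat \<Rightarrow> 'a" where
  "env0 = (\<lambda>_. K)"

definition ident :: 'a where
  "ident = lam_val env0 0 (Var 0)"

lemma ident_app [simp]: "m ident a = Some a"
  by (simp add: ident_def)

text \<open>A call-by-value fixed point combinator: fixp F = \<lambda>a. F (X X F) a with
  X = \<lambda>x F a. F (x x F) a. The abstraction over a keeps fixp F defined even where
  F (fixp F) is not.\<close>
definition fixp_aux :: 'a where
  "fixp_aux = lam_val env0 0 (lam 1 (lam 2 (Var 1 \<bullet> (Var 0 \<bullet> Var 0 \<bullet> Var 1) \<bullet> Var 2)))"

definition fixp :: "'a \<Rightarrow> 'a" where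
  "fixp F = lam_val (env0(0 := fixp_aux, 1 := F)) 2 (Var 1 \<bullet> (Var 0 \<bullet> Var 0 \<bullet> Var 1) \<bullet> Var 2)"

lemma fixp_unfold: "m (fixp F) a = aap m (m F (fixp F)) (Some a)"
proof -
  have "aap m (m fixp_aux fixp_aux) (Some F) = Some (fixp F)"
    by (simp add: fixp_aux_def fixp_def)
  then show ?thesis
    by (simp add: fixp_def)
qed

lemma eval_fixp1:
  fixes B :: "'a comb"
  defines "F \<equiv> fixp (lam_val env0 0 (lam 1 B))"
  shows "eval_comb e (Cst F \<bullet> Cst a) = eval_comb (env0(0 := F, 1 := a)) B"
  unfolding F_def by (simp add: fixp_unfold)

lemma eval_fixp3:
  fixes B :: "'a comb"
  defines "F \<equiv> fixp (lam_val env0 0 (lam 1 (lam 2 (lam 3 B))))"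
  shows "eval_comb e (Cst F \<bullet> Cst a \<bullet> Cst b \<bullet> Cst c) =
    eval_comb (env0(0 := F, 1 := a, 2 := b, 3 := c)) B"
  unfolding F_def by (simp add: fixp_unfold)

definition church_tt :: 'a where "church_tt = lam_val env0 0 (lam 1 (Var 0))"
definition church_ff :: 'a where "church_ff = lam_val env0 0 (lam 1 (Var 1))"
definition church_pr :: 'a where
  "church_pr = lam_val env0 0 (lam 1 (lam 2 (Var 2 \<bullet> Var 0 \<bullet> Var 1)))"
definition church_pair :: "'a \<Rightarrow> 'a \<Rightarrow> 'a" where
  "church_pair a b = lam_val (env0(0 := a, 1 := b)) 2 (Var 2 \<bullet> Var 0 \<bullet> Var 1)"
definition church_fst :: 'a where "church_fst = lam_val env0 0 (Var 0 \<bullet> Cst church_tt)"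
definition church_snd :: 'a where "church_snd = lam_val env0 0 (Var 0 \<bullet> Cst church_ff)"

text \<open>The tag in the first component makes church_fst the emptiness test.\<close>
fun church_code :: "'a list \<Rightarrow> 'a" where
  "church_code [] = church_pair church_tt church_tt"
| "church_code (a # us) = church_pair church_ff (church_pair a (church_code us))"

definition church_cons :: 'a where
  "church_cons =
     lam_val env0 0 (lam 1 (Cst church_pr \<bullet> Cst church_ff \<bullet> (Cst church_pr \<bullet> Var 0 \<bullet> Var 1)))"
definition church_hd :: 'a where
  "church_hd = lam_val env0 0 (Cst church_fst \<bullet> (Cst church_snd \<bullet> Var 0))"
definition church_tl :: 'a where
  "church_tl = lam_val env0 0 (Cst church_snd \<bullet> (Cst church_snd \<bullet> Var 0))"

lemma church_tt_app [simp]: "aap m (m church_tt a) (Some b) = Some a"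
  and church_ff_app [simp]: "aap m (m church_ff a) (Some b) = Some b"
  and church_pr_app [simp]: "aap m (m church_pr a) (Some b) = Some (church_pair a b)"
  and church_fst_pair [simp]: "m church_fst (church_pair a b) = Some a"
  and church_snd_pair [simp]: "m church_snd (church_pair a b) = Some b"
  by (simp_all add: church_tt_def church_ff_def church_pr_def church_pair_def church_fst_def
      church_snd_def)

lemma church_pair_eq_iff: "church_pair a b = church_pair a' b' \<longleftrightarrow> a = a' \<and> b = b'"
  by (metis option.inject church_fst_pair church_snd_pair)

lemma church_tt_neq_ff:
  assumes "(x :: 'a) \<noteq> y"
  shows "church_tt \<noteq> church_ff"
  using church_tt_app[of x y] church_ff_app[of x y] assms by force

lemma inj_church_code:
  assumes "(x :: 'a) \<noteq> y"
  shows "inj church_code"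
proof (rule injI)
  show "church_code us = church_code vs \<Longrightarrow> us = vs" for us vs
  proof (induction us arbitrary: vs)
    case Nil
    then show ?case
      using church_tt_neq_ff[OF assms] by (cases vs) (auto simp: church_pair_eq_iff)
  next
    case (Cons a us)
    then show ?case
      using church_tt_neq_ff[OF assms] by (cases vs) (auto simp: church_pair_eq_iff)
  qed
qed

definition church_data :: "'a pca_data" where
  "church_data = \<lparr>tt = church_tt, ff = church_ff, pr = church_pr, pr0 = church_fst,
     pr1 = church_snd, code = church_code\<rparr>"

lemma valid_data_church:
  assumes "(x :: 'a) \<noteq> y"
  shows "valid_data m church_data"
  unfolding valid_data_def
proof (intro conjI)
  show "inj (code church_data)"
    using inj_church_code[OF assms] by (simp add: church_data_def)
  show "\<exists>c h t n.
     (\<forall>a us. aap m (m c a) (Some (code church_data us)) = Some (code church_data (a # us))) \<and>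
     (\<forall>a us. m h (code church_data (a # us)) = Some a) \<and>
     (\<forall>a us. m t (code church_data (a # us)) = Some (code church_data us)) \<and>
     m n (code church_data []) = Some (tt church_data) \<and>
     (\<forall>a us. m n (code church_data (a # us)) = Some (ff church_data))"
    by (intro exI[of _ church_cons] exI[of _ church_hd] exI[of _ church_tl] exI[of _ church_fst])
      (simp add: church_data_def church_cons_def church_hd_def church_tl_def)
qed (simp_all add: church_data_def)

lemma valid_data_pdata:
  assumes "(x :: 'a) \<noteq> y"
  shows "valid_data m (pdata m)"
  unfolding pdata_def using valid_data_church[OF assms] by (rule someI)

end

section \<open>Programs with an oracle\<close>

locale pca_with_data = pca_KS m K S + valid_pca_data m d
  for m :: "'a pas" and K S :: 'a and d :: "'a pca_data"
begin

text \<open>Variables 95 to 99 are reserved for the program combinators. Here the branches are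
  guarded by an abstraction over variable 99, so only the chosen one is evaluated.\<close>
definition if_t :: "'a comb \<Rightarrow> 'a comb \<Rightarrow> 'a comb \<Rightarrow> 'a comb" where
  "if_t b x y = b \<bullet> lam 99 x \<bullet> lam 99 y \<bullet> Cst K"

lemma eval_if_tt [simp]:
    "eval_comb e b = Some (tt d) \<Longrightarrow> eval_comb e (if_t b x y) = eval_comb (e(99 := K)) x"
  and eval_if_ff [simp]:
    "eval_comb e b = Some (ff d) \<Longrightarrow> eval_comb e (if_t b x y) = eval_comb (e(99 := K)) y"
  by (simp_all add: if_t_def)

definition let_t :: "nat \<Rightarrow> 'a comb \<Rightarrow> 'a comb \<Rightarrow> 'a comb" where
  "let_t n s t = lam n t \<bullet> s"

lemma eval_let [simp]:
  "eval_comb e s = Some a \<Longrightarrow> eval_comb e (let_t n s t) = eval_comb (e(n := a)) t"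
  by (simp add: let_t_def)

abbreviation nil :: 'a where
  "nil \<equiv> code d []"

definition snoc_step :: 'a where
  "snoc_step = lam_val env0 0 (lam 1 (lam 2
     (if_t (Cst isnil_op \<bullet> Var 1) (Cst cons_op \<bullet> Var 2 \<bullet> Cst nil)
        (Cst cons_op \<bullet> (Cst hd_op \<bullet> Var 1) \<bullet> (Var 0 \<bullet> (Cst tl_op \<bullet> Var 1) \<bullet> Var 2)))))"

definition snoc :: 'a where
  "snoc = fixp snoc_step"

lemma snoc_unfold: "m snoc a = aap m (m snoc_step snoc) (Some a)"
  unfolding snoc_def by (rule fixp_unfold)

lemma snoc_app [simp]: "aap m (m snoc (code d us)) (Some a) = Some (code d (us @ [a]))"
proof (induction us)
  case Nil
  show ?case
    by (subst snoc_unfold) (simp add: snoc_step_def)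
next
  case (Cons b us)
  show ?case
    by (subst snoc_unfold) (simp add: snoc_step_def Cons.IH)
qed

definition run :: "('a \<Rightarrow> 'a option) \<Rightarrow> 'a \<Rightarrow> 'a \<Rightarrow> 'a list \<Rightarrow> 'a \<Rightarrow> bool" where
  "run h P x ws c \<longleftrightarrow>
     (\<forall>i < length ws. \<exists>v. m P (code d (x # take i ws)) = Some (pair (ff d) v) \<and>
        h v = Some (ws ! i)) \<and>
     m P (code d (x # ws)) = Some (pair (tt d) c)"

lemma rel_app_eq_Some_iff_run: "rel_app m d h P x = Some c \<longleftrightarrow> (\<exists>ws. run h P x ws c)"
  by (simp add: rel_app_eq_Some_iff rel_app_res_def dialogue_def run_def)

lemma rel_app_immediate: "m P (code d [x]) = Some (pair (tt d) c) \<Longrightarrow> rel_app m d h P x = Some c"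
  unfolding rel_app_eq_Some_iff_run run_def by (intro exI[of _ "[]"]) simp

definition term_computes :: "('a \<Rightarrow> 'a option) \<Rightarrow> (nat \<Rightarrow> 'a) \<Rightarrow> 'a comb \<Rightarrow> 'a \<Rightarrow> 'a \<Rightarrow> bool" where
  "term_computes h e t x c \<longleftrightarrow> (\<exists>P. eval_comb e t = Some P \<and> rel_app m d h P x = Some c)"

lemma term_computes_cong:
  "eval_comb e t = eval_comb e' t' \<Longrightarrow> term_computes h e' t' x c \<Longrightarrow> term_computes h e t x c"
  by (simp add: term_computes_def)

lemma term_computes_if_tt:
    "eval_comb e b = Some (tt d) \<Longrightarrow> term_computes h (e(99 := K)) p x c \<Longrightarrow>
     term_computes h e (if_t b p q) x c"
  and term_computes_if_ff:
    "eval_comb e b = Some (ff d) \<Longrightarrow> term_computes h (e(99 := K)) q x c \<Longrightarrow>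
     term_computes h e (if_t b p q) x c"
  by (simp_all add: term_computes_def)

lemma term_computes_let:
  "eval_comb e s = Some a \<Longrightarrow> term_computes h (e(n := a)) t x c \<Longrightarrow> term_computes h e (let_t n s t) x c"
  by (simp add: term_computes_def)

text \<open>Variable 98 is the argument of a program: the code of its input followed by the
  answers received so far.\<close>
definition lift_body :: "'a comb" where
  "lift_body = Cst (pr d) \<bullet> Cst (tt d) \<bullet> (Var 0 \<bullet> (Cst hd_op \<bullet> Var 98))"

definition lift_prog :: "'a \<Rightarrow> 'a" where
  "lift_prog f = lam_val (env0(0 := f)) 98 lift_body"

definition lift_fn :: 'a where
  "lift_fn = lam_val env0 0 (lam 98 lift_body)"

lemma lift_fn_app [simp]: "m lift_fn f = Some (lift_prog f)"
  by (simp add: lift_fn_def lift_prog_def)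

lemma rel_app_lift_prog: "m f a = Some c \<Longrightarrow> rel_app m d h (lift_prog f) a = Some c"
  by (rule rel_app_immediate) (simp add: lift_prog_def lift_body_def)

definition ret_t :: "'a comb \<Rightarrow> 'a comb" where
  "ret_t t = Cst lift_fn \<bullet> (Cst K \<bullet> t)"

lemma term_computes_ret:
  assumes "eval_comb e t = Some c"
  shows "term_computes h e (ret_t t) x c"
proof -
  obtain k where "m K c = Some k" "m k x = Some c"
    using K_app[of c x] by (cases "m K c") auto
  with assms show ?thesis
    by (simp add: term_computes_def ret_t_def rel_app_lift_prog)
qed

lemma term_computes_input: "term_computes h e (Cst (lift_prog ident)) x x"
  by (simp add: term_computes_def rel_app_lift_prog)

definition query_body :: "'a comb" where
  "query_body = if_t (Cst isnil_op \<bullet> (Cst tl_op \<bullet> Var 98))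
     (Cst (pr d) \<bullet> Cst (ff d) \<bullet> Var 0)
     (Cst (pr d) \<bullet> Cst (tt d) \<bullet> (Cst hd_op \<bullet> (Cst tl_op \<bullet> Var 98)))"

definition query_t :: "'a comb \<Rightarrow> 'a comb" where
  "query_t s = Cst (lam_val env0 0 (lam 98 query_body)) \<bullet> s"

lemma term_computes_query:
  assumes "eval_comb e s = Some q" and "h q = Some u"
  shows "term_computes h e (query_t s) x u"
proof -
  have "run h (lam_val (env0(0 := q)) 98 query_body) x [u] u"
    using assms(2) by (simp add: run_def query_body_def)
  then show ?thesis
    using assms(1) unfolding term_computes_def query_t_def rel_app_eq_Some_iff_run by auto
qed

definition oracle_reduction :: "'a \<Rightarrow> ('a \<Rightarrow> 'a option) \<Rightarrow> ('a \<Rightarrow> 'a option) \<Rightarrow> bool" where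
  "oracle_reduction T h h' \<longleftrightarrow> (\<forall>v. \<exists>v'. m T v = Some v' \<and> h' v' = h v)"

text \<open>call_t T s t runs the program s on input t, asking T v whenever s asks v.\<close>
definition call_body :: "'a \<Rightarrow> 'a comb" where
  "call_body T = let_t 2 (Var 0 \<bullet> (Cst cons_op \<bullet> Var 1 \<bullet> (Cst tl_op \<bullet> Var 98)))
     (if_t (Cst (pr0 d) \<bullet> Var 2) (Var 2)
        (Cst (pr d) \<bullet> Cst (ff d) \<bullet> (Cst T \<bullet> (Cst (pr1 d) \<bullet> Var 2))))"

definition call_t :: "'a \<Rightarrow> 'a comb \<Rightarrow> 'a comb \<Rightarrow> 'a comb" where
  "call_t T s t = Cst (lam_val env0 0 (lam 1 (lam 98 (call_body T)))) \<bullet> s \<bullet> t"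

lemma run_call:
  assumes "run h E Y ws c" and "oracle_reduction T h h'"
  shows "run h' (lam_val (env0(0 := E, 1 := Y)) 98 (call_body T)) x ws c"
  unfolding run_def
proof (intro conjI allI impI)
  fix i
  assume "i < length ws"
  then obtain v where v: "m E (code d (Y # take i ws)) = Some (pair (ff d) v)" "h v = Some (ws ! i)"
    using assms(1) unfolding run_def by blast
  obtain v' where "m T v = Some v'" "h' v' = h v"
    using assms(2) unfolding oracle_reduction_def by blast
  with v show "\<exists>v. m (lam_val (env0(0 := E, 1 := Y)) 98 (call_body T)) (code d (x # take i ws)) =
      Some (pair (ff d) v) \<and> h' v = Some (ws ! i)"
    by (simp add: call_body_def)
next
  show "m (lam_val (env0(0 := E, 1 := Y)) 98 (call_body T)) (code d (x # ws)) =
      Some (pair (tt d) c)"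
    using assms(1) by (simp add: run_def call_body_def)
qed

lemma term_computes_call:
  assumes "eval_comb e s = Some E" "eval_comb e t = Some Y" "rel_app m d h E Y = Some c"
    and "oracle_reduction T h h'"
  shows "term_computes h' e (call_t T s t) x c"
proof -
  obtain ws where "run h E Y ws c"
    using assms(3) by (auto simp: rel_app_eq_Some_iff_run)
  then have "run h' (lam_val (env0(0 := E, 1 := Y)) 98 (call_body T)) x ws c"
    using assms(4) by (rule run_call)
  then show ?thesis
    using assms(1,2) by (auto simp: term_computes_def call_t_def rel_app_eq_Some_iff_run)
qed

text \<open>bind_loop P F x p r feeds P the list p (the input x followed by the answers already
  consumed by P) and keeps r, the remaining answers; once P returns y, the program F y takes
  over with input x and transcript r.\<close>
definition bind_loop_step :: 'a where
  "bind_loop_step = lam_val env0 0 (lam 1 (lam 2 (lam 3 (lam 4 (lam 5 (let_t 6 (Var 1 \<bullet> Var 4)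
     (if_t (Cst (pr0 d) \<bullet> Var 6) (Var 2 \<bullet> (Cst (pr1 d) \<bullet> Var 6) \<bullet> (Cst cons_op \<bullet> Var 3 \<bullet> Var 5))
        (if_t (Cst isnil_op \<bullet> Var 5) (Var 6)
           (Var 0 \<bullet> Var 1 \<bullet> Var 2 \<bullet> Var 3 \<bullet> (Cst snoc \<bullet> Var 4 \<bullet> (Cst hd_op \<bullet> Var 5))
              \<bullet> (Cst tl_op \<bullet> Var 5))))))))))"

definition bind_loop :: 'a where
  "bind_loop = fixp bind_loop_step"

abbreviation bind_loop_app :: "'a \<Rightarrow> 'a \<Rightarrow> 'a \<Rightarrow> 'a list \<Rightarrow> 'a list \<Rightarrow> 'a option" where
  "bind_loop_app P F x ps rs \<equiv>
     aap m (aap m (aap m (aap m (m bind_loop P) (Some F)) (Some x)) (Some (code d (x # ps))))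
       (Some (code d rs))"

lemma bind_loop_unfold: "m bind_loop a = aap m (m bind_loop_step bind_loop) (Some a)"
  unfolding bind_loop_def by (rule fixp_unfold)

lemma bind_loop_query:
  assumes queries: "\<forall>j < length ws. m P (code d (x # take j ws)) = Some (pair (ff d) (qs j))"
    and "i < length ws"
  shows "k \<le> i \<Longrightarrow> bind_loop_app P F x (take k ws) (drop k (take i ws)) = Some (pair (ff d) (qs i))"
proof (induction "i - k" arbitrary: k)
  case 0
  then have "k = i" by simp
  then show ?case
    using queries \<open>i < length ws\<close> by (subst bind_loop_unfold) (simp add: bind_loop_step_def)
next
  case (Suc n)
  then have "k < i" by simp
  then have IH:
    "bind_loop_app P F x (take (Suc k) ws) (drop (Suc k) (take i ws)) = Some (pair (ff d) (qs i))"
    using Suc by simp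
  have "k < length (take i ws)"
    using \<open>k < i\<close> \<open>i < length ws\<close> by simp
  then have "drop k (take i ws) = ws ! k # drop (Suc k) (take i ws)"
    using \<open>k < i\<close> by (metis Cons_nth_drop_Suc nth_take)
  moreover have "take (Suc k) ws = take k ws @ [ws ! k]"
    using \<open>k < i\<close> \<open>i < length ws\<close> by (simp add: take_Suc_conv_app_nth)
  ultimately show ?case
    using queries \<open>k < i\<close> \<open>i < length ws\<close> IH
    by (subst bind_loop_unfold) (simp add: bind_loop_step_def)
qed

lemma bind_loop_return:
  assumes queries: "\<forall>j < length ws. m P (code d (x # take j ws)) = Some (pair (ff d) (qs j))"
    and result: "m P (code d (x # ws)) = Some (pair (tt d) y)"
    and "m F y = Some Q"
  shows "k \<le> length ws \<Longrightarrow> bind_loop_app P F x (take k ws) (drop k ws @ rs) = m Q (code d (x # rs))"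
proof (induction "length ws - k" arbitrary: k)
  case 0
  then have "k = length ws" by simp
  then show ?case
    using result \<open>m F y = Some Q\<close> by (subst bind_loop_unfold) (simp add: bind_loop_step_def)
next
  case (Suc n)
  then have "k < length ws" by simp
  then have IH:
    "bind_loop_app P F x (take (Suc k) ws) (drop (Suc k) ws @ rs) = m Q (code d (x # rs))"
    using Suc by simp
  have "drop k ws @ rs = ws ! k # (drop (Suc k) ws @ rs)"
    using \<open>k < length ws\<close> by (simp add: Cons_nth_drop_Suc)
  moreover have "take (Suc k) ws = take k ws @ [ws ! k]"
    using \<open>k < length ws\<close> by (simp add: take_Suc_conv_app_nth)
  ultimately show ?case
    using queries \<open>k < length ws\<close> IH by (subst bind_loop_unfold) (simp add: bind_loop_step_def)
qed

definition bind_body :: "'a comb" where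
  "bind_body = Cst bind_loop \<bullet> Var 1 \<bullet> Var 2 \<bullet> (Cst hd_op \<bullet> Var 98)
     \<bullet> (Cst cons_op \<bullet> (Cst hd_op \<bullet> Var 98) \<bullet> Cst nil) \<bullet> (Cst tl_op \<bullet> Var 98)"

definition bind_t :: "'a comb \<Rightarrow> nat \<Rightarrow> 'a comb \<Rightarrow> 'a comb" where
  "bind_t p n q = Cst (lam_val env0 1 (lam 2 (lam 98 bind_body))) \<bullet> p \<bullet> lam n q"

lemma run_bind:
  assumes first: "run h P x ws y" and "m F y = Some Q" and second: "run h Q x ws' c"
  shows "run h (lam_val (env0(1 := P, 2 := F)) 98 bind_body) x (ws @ ws') c"
proof -
  obtain qs where qs: "\<And>i. i < length ws \<Longrightarrow>
      m P (code d (x # take i ws)) = Some (pair (ff d) (qs i)) \<and> h (qs i) = Some (ws ! i)"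
    using first unfolding run_def by metis
  then have queries: "\<forall>i < length ws. m P (code d (x # take i ws)) = Some (pair (ff d) (qs i))"
    by blast
  have result: "m P (code d (x # ws)) = Some (pair (tt d) y)"
    using first unfolding run_def by blast
  note in_first = bind_loop_query[OF queries, where k = 0 and F = F, simplified]
  note in_second = bind_loop_return[OF queries result \<open>m F y = Some Q\<close>, where k = 0, simplified]
  show ?thesis
    unfolding run_def
  proof (intro conjI allI impI)
    fix i
    assume i: "i < length (ws @ ws')"
    show "\<exists>v. m (lam_val (env0(1 := P, 2 := F)) 98 bind_body) (code d (x # take i (ws @ ws'))) =
        Some (pair (ff d) v) \<and> h v = Some ((ws @ ws') ! i)"
    proof (cases "i < length ws")
      case True
      then show ?thesis
        using in_first[OF True] qs[OF True] by (simp add: bind_body_def nth_append)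
    next
      case False
      then have "i - length ws < length ws'"
        using i by simp
      then obtain v where "m Q (code d (x # take (i - length ws) ws')) = Some (pair (ff d) v)"
          "h v = Some (ws' ! (i - length ws))"
        using second unfolding run_def by blast
      with False show ?thesis
        using in_second[of "take (i - length ws) ws'"] by (simp add: bind_body_def nth_append)
    qed
  next
    show "m (lam_val (env0(1 := P, 2 := F)) 98 bind_body) (code d (x # ws @ ws')) =
        Some (pair (tt d) c)"
      using second in_second[of ws'] by (simp add: bind_body_def run_def)
  qed
qed

lemma term_computes_bind:
  assumes "term_computes h e p x y" and "term_computes h (e(n := y)) q x c"
  shows "term_computes h e (bind_t p n q) x c"
proof -
  obtain P ws where P: "eval_comb e p = Some P" "run h P x ws y"
    using assms(1) unfolding term_computes_def rel_app_eq_Some_iff_run by blast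
  obtain Q ws' where Q: "eval_comb (e(n := y)) q = Some Q" "run h Q x ws' c"
    using assms(2) unfolding term_computes_def rel_app_eq_Some_iff_run by blast
  have "m (lam_val e n q) y = Some Q"
    using Q(1) by simp
  from run_bind[OF P(2) this Q(2)] P(1) show ?thesis
    unfolding term_computes_def bind_t_def rel_app_eq_Some_iff_run by auto
qed

lemma term_computes_bind_call:
  assumes "eval_comb e s = Some E" "eval_comb e t = Some Y" "rel_app m d h E Y = Some y"
    and "oracle_reduction T h h'" and "term_computes h' (e(n := y)) q x c"
  shows "term_computes h' e (bind_t (call_t T s t) n q) x c"
  using assms by (blast intro: term_computes_bind term_computes_call)

definition bool_t :: "'a \<Rightarrow> 'a comb \<Rightarrow> 'a comb" where
  "bool_t T s = bind_t (call_t T s (Cst (tt d))) 97 (call_t T (Var 97) (Cst (ff d)))"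

lemma term_computes_bool:
  assumes "valid_data (rel_app m d h) dh" and "oracle_reduction T h h'"
    and "eval_comb e s = Some b" and "b = tt dh \<or> b = ff dh"
  shows "term_computes h' e (bool_t T s) x (if b = tt dh then tt d else ff d)"
proof -
  interpret H: valid_pca_data "rel_app m d h" dh
    using assms(1) by unfold_locales
  obtain z where z: "rel_app m d h b (tt d) = Some z"
    "\<And>a. rel_app m d h z a = Some (if b = tt dh then tt d else a)"
    using assms(4) H.app_tt_ex[of "tt d"] H.app_ff_ex[of "tt d"] by auto
  show ?thesis
    unfolding bool_t_def
    by (rule term_computes_bind_call[OF assms(3) _ z(1) assms(2)], simp)
      (rule term_computes_call[OF _ _ z(2) assms(2)], simp_all)
qed

definition lift2_prog :: "'a \<Rightarrow> 'a" where
  "lift2_prog f = lift_prog (lam_val (env0(1 := f)) 0 (Cst lift_fn \<bullet> (Var 1 \<bullet> Var 0)))"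

lemma rel_app_lift2_prog: "m f a = Some g \<Longrightarrow> rel_app m d h (lift2_prog f) a = Some (lift_prog g)"
  unfolding lift2_prog_def by (rule rel_app_lift_prog) simp

lemma rel_app_lift2_prog2:
  assumes "aap m (m f a) (Some b) = Some c"
  shows "aap (rel_app m d h) (rel_app m d h (lift2_prog f) a) (Some b) = Some c"
proof -
  obtain g where "m f a = Some g" "m g b = Some c"
    using assms by (cases "m f a") auto
  then show ?thesis
    by (simp add: rel_app_lift2_prog rel_app_lift_prog)
qed

definition ext_data :: "'a pca_data" where
  "ext_data = \<lparr>tt = lift2_prog (tt d), ff = lift2_prog (ff d), pr = lift2_prog (pr d),
     pr0 = lift_prog (pr0 d), pr1 = lift_prog (pr1 d), code = code d\<rparr>"

lemma valid_data_rel_app: "valid_data (rel_app m d h) ext_data"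
  unfolding valid_data_def
proof (intro conjI)
  show "inj (code ext_data)"
    using valid by (simp add: ext_data_def valid_data_def)
  let ?isnil =
    "lift_prog (lam_val env0 0 (Cst isnil_op \<bullet> Var 0 \<bullet> Cst (tt ext_data) \<bullet> Cst (ff ext_data)))"
  show "\<exists>c h' t n.
     (\<forall>a us. aap (rel_app m d h) (rel_app m d h c a) (Some (code ext_data us)) =
        Some (code ext_data (a # us))) \<and>
     (\<forall>a us. rel_app m d h h' (code ext_data (a # us)) = Some a) \<and>
     (\<forall>a us. rel_app m d h t (code ext_data (a # us)) = Some (code ext_data us)) \<and>
     rel_app m d h n (code ext_data []) = Some (tt ext_data) \<and>
     (\<forall>a us. rel_app m d h n (code ext_data (a # us)) = Some (ff ext_data))"
    by (intro exI[of _ "lift2_prog cons_op"] exI[of _ "lift_prog hd_op"] exI[of _ "lift_prog tl_op"]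
        exI[of _ ?isnil])
      (simp add: ext_data_def rel_app_lift_prog rel_app_lift2_prog2)
qed (auto simp: ext_data_def rel_app_lift_prog rel_app_lift2_prog2)

lemma valid_data_pdata_rel_app: "valid_data (rel_app m d h) (pdata (rel_app m d h))"
  unfolding pdata_def using valid_data_rel_app by (rule someI)

definition oracle_sum :: "('a \<Rightarrow> 'a option) \<Rightarrow> ('a \<Rightarrow> 'a option) \<Rightarrow> 'a \<Rightarrow> 'a option" where
  "oracle_sum f g q =
     (if \<exists>v. q = pair (tt d) v then f (THE v. q = pair (tt d) v)
      else if \<exists>v. q = pair (ff d) v then g (THE v. q = pair (ff d) v) else None)"

lemma oracle_sum_tt [simp]: "oracle_sum f g (pair (tt d) v) = f v"
  and oracle_sum_ff [simp]: "oracle_sum f g (pair (ff d) v) = g v"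
  by (auto simp: oracle_sum_def)

lemma oracle_sum_eq_SomeE:
  assumes "oracle_sum f g q = Some u"
  obtains v where "q = pair (tt d) v" "f v = Some u" | v where "q = pair (ff d) v" "g v = Some u"
  using assms unfolding oracle_sum_def by (auto split: if_splits)

definition tag :: "'a \<Rightarrow> 'a" where
  "tag b = lam_val (env0(0 := b)) 1 (Cst (pr d) \<bullet> Var 0 \<bullet> Var 1)"

lemma tag_app [simp]: "m (tag b) v = Some (pair b v)"
  by (simp add: tag_def)

lemma oracle_reduction_tag_tt: "oracle_reduction (tag (tt d)) f (oracle_sum f g)"
  by (simp add: oracle_reduction_def)

lemma oracle_reduction_ident: "oracle_reduction ident h h"
  by (simp add: oracle_reduction_def)

end

section \<open>Simulating A[f][g] with the oracle sum\<close>

locale two_oracles = pca_with_data m K S d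
  for m :: "'a pas" and K S :: 'a and d :: "'a pca_data" +
  fixes f g :: "'a \<Rightarrow> 'a option"
begin

abbreviation A_f :: "'a pas" where "A_f \<equiv> rel_app m d f"
abbreviation d_f :: "'a pca_data" where "d_f \<equiv> pdata (rel_app m d f)"
abbreviation A_g :: "'a pas" where "A_g \<equiv> rel_app m d g"
abbreviation d_g :: "'a pca_data" where "d_g \<equiv> pdata (rel_app m d g)"

sublocale Af: valid_pca_data "rel_app m d f" "pdata (rel_app m d f)"
  by unfold_locales (rule valid_data_pdata_rel_app)

sublocale Ag: valid_pca_data "rel_app m d g" "pdata (rel_app m d g)"
  by unfold_locales (rule valid_data_pdata_rel_app)

definition recode_body :: "'a comb" where
  "recode_body = if_t (Cst isnil_op \<bullet> Var 1) (ret_t (Cst (code d_f [])))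
     (bind_t (Var 0 \<bullet> (Cst tl_op \<bullet> Var 1)) 2
     (bind_t (call_t (tag (tt d)) (Cst Af.cons_op) (Cst hd_op \<bullet> Var 1)) 3
     (call_t (tag (tt d)) (Var 3) (Var 2))))"

definition recode :: 'a where
  "recode = fixp (lam_val env0 0 (lam 1 recode_body))"

lemma eval_recode:
  "eval_comb e (Cst recode \<bullet> Cst l) = eval_comb (env0(0 := recode, 1 := l)) recode_body"
  unfolding recode_def by (rule eval_fixp1)

lemma term_computes_recode:
  "term_computes (oracle_sum f g) e (Cst recode \<bullet> Cst (code d us)) x (code d_f us)"
proof (induction us arbitrary: e)
  case Nil
  show ?case
    by (rule term_computes_cong[OF eval_recode], unfold recode_body_def)
      (rule term_computes_if_tt, simp, rule term_computes_ret, simp)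
next
  case (Cons b us)
  obtain c where c: "A_f Af.cons_op b = Some c"
      "\<And>us. A_f c (code d_f us) = Some (code d_f (b # us))"
    using Af.cons_op_app[of b] by (cases "A_f Af.cons_op b") auto
  show ?case
    apply (rule term_computes_cong[OF eval_recode], unfold recode_body_def)
    apply (rule term_computes_if_ff, simp)
    apply (rule term_computes_bind[where y = "code d_f us"])
     apply (rule term_computes_cong[OF _ Cons.IH], simp)
    apply (rule term_computes_bind_call[OF _ _ c(1) oracle_reduction_tag_tt], simp, simp)
    apply (rule term_computes_call[OF _ _ c(2) oracle_reduction_tag_tt], simp_all)
    done
qed

definition sim_step_t :: "'a comb" where
  "sim_step_t =
     bind_t (Cst recode \<bullet> (Cst cons_op \<bullet> Var 2 \<bullet> Var 3)) 6
     (bind_t (call_t (tag (tt d)) (Var 1) (Var 6)) 7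
     (bind_t (call_t (tag (tt d)) (Cst (pr0 d_f)) (Var 7)) 8
     (bind_t (bool_t (tag (tt d)) (Var 8)) 9
     (bind_t (call_t (tag (tt d)) (Cst (pr1 d_f)) (Var 7)) 10
     (ret_t (Cst (pr d) \<bullet> Var 9 \<bullet> Var 10))))))"

lemma term_computes_sim_step:
  assumes step: "A_f a (code d_f (a' # us)) = Some (Af.pair b v)" and "b = tt d_f \<or> b = ff d_f"
  shows "term_computes (oracle_sum f g) (e(1 := a, 2 := a', 3 := code d us)) sim_step_t x
    (pair (if b = tt d_f then tt d else ff d) v)"
  unfolding sim_step_t_def
  apply (rule term_computes_bind[where y = "code d_f (a' # us)"])
   apply (rule term_computes_cong[OF _ term_computes_recode], simp)
  apply (rule term_computes_bind_call[OF _ _ step oracle_reduction_tag_tt], simp, simp)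
  apply (rule term_computes_bind_call[OF _ _ Af.pr0_pair oracle_reduction_tag_tt], simp, simp)
  apply (rule term_computes_bind[OF term_computes_bool[OF valid_data_pdata_rel_app
        oracle_reduction_tag_tt _ \<open>b = tt d_f \<or> b = ff d_f\<close>]], simp)
  apply (rule term_computes_bind_call[OF _ _ Af.pr1_pair oracle_reduction_tag_tt], simp, simp)
  apply (rule term_computes_ret, simp)
  done

definition sim_loop_body :: "'a comb" where
  "sim_loop_body = bind_t sim_step_t 4
     (if_t (Cst (pr0 d) \<bullet> Var 4) (ret_t (Cst (pr1 d) \<bullet> Var 4))
        (bind_t (query_t (Cst (pr d) \<bullet> Cst (ff d) \<bullet> (Cst (pr1 d) \<bullet> Var 4))) 5
           (Var 0 \<bullet> Var 1 \<bullet> Var 2 \<bullet> (Cst snoc \<bullet> Var 3 \<bullet> Var 5))))"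

definition sim_loop :: 'a where
  "sim_loop = fixp (lam_val env0 0 (lam 1 (lam 2 (lam 3 sim_loop_body))))"

abbreviation sim_loop_t :: "'a \<Rightarrow> 'a \<Rightarrow> 'a list \<Rightarrow> 'a comb" where
  "sim_loop_t a a' us \<equiv> Cst sim_loop \<bullet> Cst a \<bullet> Cst a' \<bullet> Cst (code d us)"

lemma eval_sim_loop:
  "eval_comb e (sim_loop_t a a' us) =
     eval_comb (env0(0 := sim_loop, 1 := a, 2 := a', 3 := code d us)) sim_loop_body"
  unfolding sim_loop_def by (rule eval_fixp3)

lemma sim_loop_return:
  assumes "A_f a (code d_f (a' # us)) = Some (Af.pair (tt d_f) c)"
  shows "term_computes (oracle_sum f g) e (sim_loop_t a a' us) x c"
  apply (rule term_computes_cong[OF eval_sim_loop], unfold sim_loop_body_def)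
  apply (rule term_computes_bind[OF term_computes_sim_step[OF assms]], simp_all)
  apply (rule term_computes_if_tt, simp)
  apply (rule term_computes_ret, simp)
  done

lemma sim_loop_query:
  assumes "A_f a (code d_f (a' # us)) = Some (Af.pair (ff d_f) v)" and "g v = Some u"
    and "term_computes (oracle_sum f g) e (sim_loop_t a a' (us @ [u])) x c"
  shows "term_computes (oracle_sum f g) e (sim_loop_t a a' us) x c"
  apply (rule term_computes_cong[OF eval_sim_loop], unfold sim_loop_body_def)
  apply (rule term_computes_bind[OF term_computes_sim_step[OF assms(1)]], simp_all)
  apply (rule term_computes_if_ff, simp)
  apply (rule term_computes_bind[OF term_computes_query[where u = u]], simp, simp add: assms(2))
  apply (rule term_computes_cong[OF _ assms(3)], simp)
  done

lemma term_computes_sim_loop: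
  assumes "rel_app A_f d_f g a a' = Some c"
  shows "term_computes (oracle_sum f g) e (sim_loop_t a a' []) x c"
proof -
  obtain us where D: "dialogue A_f d_f g a a' us"
    and F: "A_f a (code d_f (a' # us)) = Some (Af.pair (tt d_f) c)"
    using assms unfolding Af.rel_app_eq_Some_iff rel_app_res_def by auto
  have "term_computes (oracle_sum f g) e (sim_loop_t a a' (take k us)) x c" if "k \<le> length us" for k
    using that
  proof (induction "length us - k" arbitrary: k)
    case 0
    then show ?case
      using F sim_loop_return by simp
  next
    case (Suc n)
    then have "k < length us" by simp
    then obtain v where "A_f a (code d_f (a' # take k us)) = Some (Af.pair (ff d_f) v)"
        "g v = Some (us ! k)"
      using D unfolding dialogue_def by auto
    moreover have "term_computes (oracle_sum f g) e (sim_loop_t a a' (take k us @ [us ! k])) x c"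
      using Suc(1)[of "Suc k"] Suc(2) \<open>k < length us\<close> by (simp add: take_Suc_conv_app_nth)
    ultimately show ?case
      by (rule sim_loop_query)
  qed
  from this[of 0] show ?thesis by simp
qed

section \<open>Simulating the oracle sum in A[g][f]\<close>

definition ag_pair_t :: "'a \<Rightarrow> 'a comb \<Rightarrow> 'a comb" where
  "ag_pair_t b t =
     let_t 96 t (bind_t (call_t ident (Cst (pr d_g)) (Cst b)) 95 (call_t ident (Var 95) (Var 96)))"

lemma term_computes_ag_pair:
  assumes "eval_comb e t = Some v"
  shows "term_computes g e (ag_pair_t b t) x (Ag.pair b v)"
proof -
  obtain p where p: "A_g (pr d_g) b = Some p" "\<And>v. A_g p v = Some (Ag.pair b v)"
    using Ag.app_pr_ex by blast
  show ?thesis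
    unfolding ag_pair_t_def
    apply (rule term_computes_let[OF assms])
    apply (rule term_computes_bind_call[OF _ _ p(1) oracle_reduction_ident], simp, simp)
    apply (rule term_computes_call[OF _ _ p(2) oracle_reduction_ident], simp_all)
    done
qed

text \<open>split_loop P l z runs the program P for the oracle sum of f and g on input K: l codes
  the answers P has received so far, z codes, as a list of A[g], the answers to f-queries
  that are still available. A g-query is asked directly; an f-query with no answer left is passed on
  to f, as the query of an A[g][f]-application.\<close>
definition split_loop_body :: "'a comb" where
  "split_loop_body =
     let_t 4 (Var 1 \<bullet> (Cst cons_op \<bullet> Cst K \<bullet> Var 2))
     (if_t (Cst (pr0 d) \<bullet> Var 4) (ag_pair_t (tt d_g) (Cst (pr1 d) \<bullet> Var 4))
       (let_t 6 (Cst (pr1 d) \<bullet> Var 4)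
        (let_t 7 (Cst (pr1 d) \<bullet> Var 6)
         (if_t (Cst (pr0 d) \<bullet> Var 6)
           (bind_t (call_t ident (Cst Ag.isnil_op) (Var 3)) 8
            (bind_t (bool_t ident (Var 8)) 9
             (if_t (Var 9) (ag_pair_t (ff d_g) (Var 7))
               (bind_t (call_t ident (Cst Ag.hd_op) (Var 3)) 10
                (bind_t (call_t ident (Cst Ag.tl_op) (Var 3)) 11
                 (Var 0 \<bullet> Var 1 \<bullet> (Cst snoc \<bullet> Var 2 \<bullet> Var 10) \<bullet> Var 11))))))
           (bind_t (query_t (Var 7)) 12 (Var 0 \<bullet> Var 1 \<bullet> (Cst snoc \<bullet> Var 2 \<bullet> Var 12) \<bullet> Var 3))))))"

definition split_loop :: 'a where
  "split_loop = fixp (lam_val env0 0 (lam 1 (lam 2 (lam 3 split_loop_body))))"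

abbreviation split_loop_t :: "'a \<Rightarrow> 'a list \<Rightarrow> 'a list \<Rightarrow> 'a comb" where
  "split_loop_t P ws zs \<equiv> Cst split_loop \<bullet> Cst P \<bullet> Cst (code d ws) \<bullet> Cst (code d_g zs)"

lemma eval_split_loop:
  "eval_comb e (split_loop_t P ws zs) =
     eval_comb (env0(0 := split_loop, 1 := P, 2 := code d ws, 3 := code d_g zs)) split_loop_body"
  unfolding split_loop_def by (rule eval_fixp3)

lemma split_loop_return:
  assumes "m P (code d (K # ws)) = Some (pair (tt d) c)"
  shows "term_computes g e (split_loop_t P ws zs) x (Ag.pair (tt d_g) c)"
  apply (rule term_computes_cong[OF eval_split_loop], unfold split_loop_body_def)
  apply (rule term_computes_let, simp add: assms)
  apply (rule term_computes_if_tt, simp)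
  apply (rule term_computes_ag_pair, simp)
  done

lemma split_loop_ask_f:
  assumes "m P (code d (K # ws)) = Some (pair (ff d) (pair (tt d) v))"
  shows "term_computes g e (split_loop_t P ws []) x (Ag.pair (ff d_g) v)"
  apply (rule term_computes_cong[OF eval_split_loop], unfold split_loop_body_def)
  apply (rule term_computes_let, simp add: assms)
  apply (rule term_computes_if_ff, simp)
  apply (rule term_computes_let, simp, rule term_computes_let, simp)
  apply (rule term_computes_if_tt, simp)
  apply (rule term_computes_bind_call[OF _ _ Ag.isnil_op_Nil oracle_reduction_ident], simp, simp)
  apply (rule term_computes_bind[OF
        term_computes_bool[OF valid_data_pdata_rel_app oracle_reduction_ident]], simp, simp)
  apply (rule term_computes_if_tt, simp)
  apply (rule term_computes_ag_pair, simp)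
  done

lemma split_loop_answer_f:
  assumes "m P (code d (K # ws)) = Some (pair (ff d) (pair (tt d) v))"
    and "term_computes g e (split_loop_t P (ws @ [u]) zs) x y"
  shows "term_computes g e (split_loop_t P ws (u # zs)) x y"
  apply (rule term_computes_cong[OF eval_split_loop], unfold split_loop_body_def)
  apply (rule term_computes_let, simp add: assms(1))
  apply (rule term_computes_if_ff, simp)
  apply (rule term_computes_let, simp, rule term_computes_let, simp)
  apply (rule term_computes_if_tt, simp)
  apply (rule term_computes_bind_call[OF _ _ Ag.isnil_op_Cons oracle_reduction_ident], simp, simp)
  apply (rule term_computes_bind[OF
        term_computes_bool[OF valid_data_pdata_rel_app oracle_reduction_ident]], simp, simp)
  apply (rule term_computes_if_ff, simp)
  apply (rule term_computes_bind_call[OF _ _ Ag.hd_op_app oracle_reduction_ident], simp, simp)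
  apply (rule term_computes_bind_call[OF _ _ Ag.tl_op_app oracle_reduction_ident], simp, simp)
  apply (rule term_computes_cong[OF _ assms(2)], simp)
  done

lemma split_loop_query_g:
  assumes "m P (code d (K # ws)) = Some (pair (ff d) (pair (ff d) v))" and "g v = Some u"
    and "term_computes g e (split_loop_t P (ws @ [u]) zs) x y"
  shows "term_computes g e (split_loop_t P ws zs) x y"
  apply (rule term_computes_cong[OF eval_split_loop], unfold split_loop_body_def)
  apply (rule term_computes_let, simp add: assms(1))
  apply (rule term_computes_if_ff, simp)
  apply (rule term_computes_let, simp, rule term_computes_let, simp)
  apply (rule term_computes_if_ff, simp)
  apply (rule term_computes_bind[OF term_computes_query[where u = u]], simp, simp add: assms(2))
  apply (rule term_computes_cong[OF _ assms(3)], simp)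
  done

definition asks_f :: "'a \<Rightarrow> 'a list \<Rightarrow> nat \<Rightarrow> bool" where
  "asks_f P os i \<longleftrightarrow> (\<exists>v. m P (code d (K # take i os)) = Some (pair (ff d) (pair (tt d) v)))"

definition f_answers :: "'a \<Rightarrow> 'a list \<Rightarrow> nat \<Rightarrow> 'a list" where
  "f_answers P os k = map (nth os) (filter (asks_f P os) [k..<length os])"

lemma f_answers_end: "f_answers P os (length os) = []"
  by (simp add: f_answers_def)

lemma f_answers_step:
  "k < length os \<Longrightarrow>
     f_answers P os k =
       (if asks_f P os k then os ! k # f_answers P os (Suc k) else f_answers P os (Suc k))"
  by (simp add: f_answers_def upt_conv_Cons)

definition outcome :: "'a \<Rightarrow> 'a list \<Rightarrow> nat \<Rightarrow> 'a \<Rightarrow> bool" where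
  "outcome c zs j y \<longleftrightarrow>
     (j = length zs \<and> y = Ag.pair (tt d_g) c) \<or>
     (j < length zs \<and> (\<exists>v. f v = Some (zs ! j) \<and> y = Ag.pair (ff d_g) v))"

text \<open>Given the first j answers to its f-queries, the loop replays the run of P and stops
  at the (j+1)-st f-query, or at the end of the run.\<close>
lemma split_loop_correct:
  assumes run: "run (oracle_sum f g) P K os c"
  shows "k \<le> length os \<Longrightarrow> j \<le> length (f_answers P os k) \<Longrightarrow>
    \<exists>y. outcome c (f_answers P os k) j y \<and>
      term_computes g e (split_loop_t P (take k os) (take j (f_answers P os k))) x y"
proof (induction "length os - k" arbitrary: k j)
  case 0
  then have "k = length os" by simp
  moreover have "m P (code d (K # os)) = Some (pair (tt d) c)"
    using run unfolding run_def by blast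
  ultimately show ?case
    using split_loop_return "0.prems"(2) by (simp add: f_answers_end outcome_def)
next
  case (Suc n)
  then have "k < length os" by simp
  then obtain q where q: "m P (code d (K # take k os)) = Some (pair (ff d) q)"
    "oracle_sum f g q = Some (os ! k)"
    using run unfolding run_def by blast
  have tk: "take (Suc k) os = take k os @ [os ! k]"
    using \<open>k < length os\<close> by (simp add: take_Suc_conv_app_nth)
  have IH: "\<exists>y. outcome c (f_answers P os (Suc k)) j' y \<and>
      term_computes g e
        (split_loop_t P (take k os @ [os ! k]) (take j' (f_answers P os (Suc k)))) x y"
    if "j' \<le> length (f_answers P os (Suc k))" for j'
    using Suc(1)[of "Suc k" j'] Suc(2) \<open>k < length os\<close> that tk by simp
  from q(2) show ?case
  proof (cases rule: oracle_sum_eq_SomeE)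
    case (1 v)
    then have zs: "f_answers P os k = os ! k # f_answers P os (Suc k)"
      using q(1) \<open>k < length os\<close> by (auto simp: f_answers_step asks_f_def)
    show ?thesis
    proof (cases j)
      case 0
      then show ?thesis
        using split_loop_ask_f q(1) 1 by (auto simp: zs outcome_def)
    next
      case (Suc j')
      then obtain y where "outcome c (f_answers P os (Suc k)) j' y"
        "term_computes g e
           (split_loop_t P (take k os @ [os ! k]) (take j' (f_answers P os (Suc k)))) x y"
        using IH[of j'] Suc.prems(2) by (auto simp: zs)
      then show ?thesis
        using split_loop_answer_f q(1) 1 Suc by (auto simp: zs outcome_def)
    qed
  next
    case (2 v)
    then have "f_answers P os k = f_answers P os (Suc k)"
      using q(1) \<open>k < length os\<close> by (auto simp: f_answers_step asks_f_def)
    then show ?thesis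
      using IH[of j] Suc.prems(2) split_loop_query_g q(1) 2 by auto
  qed
qed

lemma rel_app_if_outcomes:
  assumes "\<And>j. j \<le> length zs \<Longrightarrow>
    \<exists>y. outcome c zs j y \<and> A_g r (code d_g (a' # take j zs)) = Some y"
  shows "rel_app A_g d_g f r a' = Some c"
  unfolding Ag.rel_app_eq_Some_iff rel_app_res_def
proof (intro exI conjI)
  show "dialogue A_g d_g f r a' zs"
    unfolding dialogue_def
  proof (intro allI impI)
    fix i
    assume "i < length zs"
    with assms[of i] obtain v where "A_g r (code d_g (a' # take i zs)) = Some (Ag.pair (ff d_g) v)"
      "f v = Some (zs ! i)"
      unfolding outcome_def by auto
    then show "\<exists>v. A_g r (code d_g (a' # take i zs)) = aap A_g (A_g (pr d_g) (ff d_g)) (Some v) \<and>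
        f v = Some (zs ! i)"
      by auto
  qed
  show "A_g r (code d_g (a' # zs)) = aap A_g (A_g (pr d_g) (tt d_g)) (Some c)"
    using assms[of "length zs"] unfolding outcome_def by auto
qed

definition realizer_curried_body :: "'a \<Rightarrow> 'a comb" where
  "realizer_curried_body G =
     bind_t (Cst (lift_prog ident)) 1
     (bind_t (call_t ident (Cst Ag.hd_op) (Var 1)) 2
     (bind_t (call_t ident (Cst Ag.tl_op) (Var 1)) 3
     (let_t 4 (Cst G \<bullet> Var 0 \<bullet> Var 2 \<bullet> Cst nil) (Cst split_loop \<bullet> Var 4 \<bullet> Cst nil \<bullet> Var 3))))"

definition realizer_curried :: "'a \<Rightarrow> 'a" where
  "realizer_curried G = lam_val env0 0 (realizer_curried_body G)"

lemma realizer_curried_app_ex: "\<exists>r. m (realizer_curried G) a = Some r"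
  by (simp add: realizer_curried_def realizer_curried_body_def bind_t_def)

lemma realizer_curried_correct:
  assumes r: "m (realizer_curried G) a = Some r"
    and P: "aap m (aap m (m G a) (Some a')) (Some nil) = Some P"
    and loop: "term_computes g env0 (split_loop_t P [] zs) (code d_g (a' # zs)) y"
  shows "A_g r (code d_g (a' # zs)) = Some y"
proof -
  have "term_computes g (env0(0 := a)) (realizer_curried_body G) (code d_g (a' # zs)) y"
    unfolding realizer_curried_body_def
    apply (rule term_computes_bind[OF term_computes_input])
    apply (rule term_computes_bind_call[OF _ _ Ag.hd_op_app oracle_reduction_ident], simp, simp)
    apply (rule term_computes_bind_call[OF _ _ Ag.tl_op_app oracle_reduction_ident], simp, simp)
    apply (rule term_computes_let, simp add: P)
    apply (rule term_computes_cong[OF _ loop], simp)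
    done
  then show ?thesis
    using r by (simp add: term_computes_def realizer_curried_def)
qed

definition realizer_body :: "'a \<Rightarrow> 'a comb" where
  "realizer_body G =
     bind_t (Cst (lift_prog ident)) 1
     (bind_t (call_t ident (Cst Ag.hd_op) (Var 1)) 2
     (ag_pair_t (tt d_g) (Cst (realizer_curried G) \<bullet> Var 2)))"

definition realizer :: "'a \<Rightarrow> 'a" where
  "realizer G = the (eval_comb env0 (realizer_body G))"

lemma eval_realizer_body: "eval_comb env0 (realizer_body G) = Some (realizer G)"
proof -
  have "\<exists>r. eval_comb env0 (realizer_body G) = Some r"
    by (simp add: realizer_body_def bind_t_def)
  then show ?thesis
    unfolding realizer_def by auto
qed

lemma rel_app_realizer:
  assumes "m (realizer_curried G) a = Some r"
  shows "rel_app A_g d_g f (realizer G) a = Some r"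
proof -
  have "term_computes g env0 (realizer_body G) (code d_g [a]) (Ag.pair (tt d_g) r)"
    unfolding realizer_body_def
    apply (rule term_computes_bind[OF term_computes_input])
    apply (rule term_computes_bind_call[OF _ _ Ag.hd_op_app oracle_reduction_ident], simp, simp)
    apply (rule term_computes_ag_pair, simp add: assms)
    done
  then have "A_g (realizer G) (code d_g [a]) = Some (Ag.pair (tt d_g) r)"
    using eval_realizer_body by (simp add: term_computes_def)
  then show ?thesis
    unfolding Ag.rel_app_eq_Some_iff rel_app_res_def dialogue_def
    by (intro exI[of _ "[]"]) simp
qed

lemma realizer_correct:
  assumes "term_computes (oracle_sum f g) env0 (Cst G \<bullet> Cst a \<bullet> Cst a' \<bullet> Cst nil) K c"
  shows "aap (rel_app A_g d_g f) (rel_app A_g d_g f (realizer G) a) (Some a') = Some c"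
proof -
  obtain P os where P: "aap m (aap m (m G a) (Some a')) (Some nil) = Some P"
    and run: "run (oracle_sum f g) P K os c"
    using assms unfolding term_computes_def rel_app_eq_Some_iff_run by auto
  obtain r where r: "m (realizer_curried G) a = Some r"
    using realizer_curried_app_ex by blast
  define zs where "zs = f_answers P os 0"
  have "rel_app A_g d_g f r a' = Some c"
  proof (rule rel_app_if_outcomes)
    fix j
    assume "j \<le> length zs"
    then obtain y where "outcome c zs j y"
      "term_computes g env0 (split_loop_t P [] (take j zs)) (code d_g (a' # take j zs)) y"
      using split_loop_correct[OF run, of 0 j env0 "code d_g (a' # take j zs)"]
      by (auto simp: zs_def)
    then show "\<exists>y. outcome c zs j y \<and> A_g r (code d_g (a' # take j zs)) = Some y"
      using realizer_curried_correct[OF r P] by blast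
  qed
  then show ?thesis
    using rel_app_realizer[OF r] by simp
qed

theorem ex_realizer_swap_oracles:
  "\<exists>r. \<forall>a a' c. rel_app A_f d_f g a a' = Some c \<longrightarrow>
     aap (rel_app A_g d_g f) (rel_app A_g d_g f r a) (Some a') = Some c"
  using term_computes_sim_loop realizer_correct by blast

end

section \<open>The isomorphism\<close>

lemma pca_KS_if_pca: "pca m \<Longrightarrow> \<exists>K S. pca_KS m K S"
  unfolding pca_def pca_KS_def by blast

lemma pca_iso_if_realizers:
  assumes "\<exists>r. \<forall>a a' c. m1 a a' = Some c \<longrightarrow> aap m2 (m2 r a) (Some a') = Some c"
    and "\<exists>r. \<forall>a a' c. m2 a a' = Some c \<longrightarrow> aap m1 (m1 r a) (Some a') = Some c"
  shows "pca_iso m1 m2"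
proof -
  have "morph_comp (\<lambda>a. {a}) (\<lambda>a. {a}) = (\<lambda>a. {a})"
    by (rule ext) (simp add: morph_comp_def)
  moreover have "app_morph m1 m2 (\<lambda>a. {a})" "app_morph m2 m1 (\<lambda>a. {a})"
    unfolding app_morph_def using assms by auto
  ultimately show ?thesis
    unfolding pca_iso_def by blast
qed

lemma rel_app_total_if_subsingleton:
  fixes X :: "'a pas"
  assumes single: "\<And>x y :: 'a. x = y" and total: "\<And>a b. X a b \<noteq> None"
  shows "rel_app X dd h a b \<noteq> None"
proof -
  obtain z where "X a (code dd [b]) = Some z"
    using total by blast
  moreover obtain w where "X (pr dd) (tt dd) = Some w"
    using total by blast
  moreover obtain z' where "X w a = Some z'"
    using total by blast
  ultimately have "rel_app_res X dd h a b a"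
    unfolding rel_app_res_def dialogue_def by (intro exI[of _ "[]"]) (simp add: single[of z z'])
  then show ?thesis
    unfolding rel_app_def by auto
qed

lemma pca_iso_if_subsingleton:
  fixes m1 m2 :: "'a pas"
  assumes single: "\<And>x y :: 'a. x = y" and "\<And>a b. m1 a b \<noteq> None" "\<And>a b. m2 a b \<noteq> None"
  shows "pca_iso m1 m2"
proof (rule pca_iso_if_realizers)
  have "aap m' (m' r a) (Some a') = Some c"
    if total: "\<And>a b. m' a b \<noteq> None" for m' :: "'a pas" and r a a' c
  proof -
    obtain u where u: "m' r a = Some u"
      using total by blast
    obtain v where "m' u a' = Some v"
      using total by blast
    then show ?thesis
      using u single[of v c] by simp
  qed
  then show "\<exists>r. \<forall>a a' c. m1 a a' = Some c \<longrightarrow> aap m2 (m2 r a) (Some a') = Some c"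
    and "\<exists>r. \<forall>a a' c. m2 a a' = Some c \<longrightarrow> aap m1 (m1 r a) (Some a') = Some c"
    using assms(2,3) by blast+
qed

context pca_KS
begin

lemma pca_iso_extend_extend_if_nontrivial:
  assumes "(x :: 'a) \<noteq> y"
  shows "pca_iso (extend (extend m f) g) (extend (extend m g) f)"
proof -
  interpret pca_with_data m K S "pdata m"
    using valid_data_pdata[OF assms] by unfold_locales
  interpret fg: two_oracles m K S "pdata m" f g by intro_locales
  interpret gf: two_oracles m K S "pdata m" g f by intro_locales
  show ?thesis
    unfolding extend_def
    using fg.ex_realizer_swap_oracles gf.ex_realizer_swap_oracles by (rule pca_iso_if_realizers)
qed

lemma pca_iso_extend_extend_if_subsingleton:
  assumes single: "\<And>x y :: 'a. x = y"
  shows "pca_iso (extend (extend m f) g) (extend (extend m g) f)"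
proof -
  have "m a b \<noteq> None" for a b
    using K_app[of b b] single[of a K] by (cases "m K b") auto
  then have "extend m h a b \<noteq> None" for h a b
    unfolding extend_def by (rule rel_app_total_if_subsingleton[OF single])
  then have total: "extend (extend m h) h' a b \<noteq> None" for h h' a b
    unfolding extend_def[of "extend m h"] by (rule rel_app_total_if_subsingleton[OF single])
  show ?thesis
    by (rule pca_iso_if_subsingleton[OF single total total])
qed

end

theorem mainTheorem4:
  fixes m :: "'a pas" and f g :: "'a \<Rightarrow> 'a option"
  assumes "pca m"
  shows "pca_iso (extend (extend m f) g) (extend (extend m g) f)"
proof -
  obtain K S where "pca_KS m K S"
    using pca_KS_if_pca[OF assms] by blast
  then interpret pca_KS m K S .
  show ?thesis
  proof (cases "\<exists>x y :: 'a. x \<noteq> y")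
    case True
    then show ?thesis
      using pca_iso_extend_extend_if_nontrivial by blast
  next
    case False
    then show ?thesis
      using pca_iso_extend_extend_if_subsingleton by blast
  qed
qed

end
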